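(* For every integer $n \ge 1$, let $f(n)$ be the number of partitions $\lambda \vdash n$ that have a fixed hook. Then $$f(n) = \sum_{\lambda \vdash n} \#\{\, i \ge 1 : \text{the part } i \text{ occurs in } \lambda \text{ with multiplicity exactly } i \,\}.$$
   Context: A partition $\lambda=(\lambda_1,\dots,\lambda_t)$ of $n$ (written $\lambda\vdash n$) is a sequence of integers $\lambda_1\ge\lambda_2\ge\cdots\ge\lambda_t>0$ with $\sum_i\lambda_i=n$; $t$ is its number of parts. The first-column hook lengths of $\lambda$ are $h_{i,1}(\lambda)=\lambda_i+(t-i)$ for $1\le i\le t$ (the hook length of the box $(i,1)$ of the Young diagram). For $h\in\mathbb{Z}$, $\lambda$ has an $h$-fixed hook if there is some $i\ge1$ with $h_{i,1}(\lambda)=i+h$; a $0$-fixed hook is called a fixed hook, i.e. $\lambda$ has a fixed hook if $h_{i,1}(\lambda)=i$ for some $i$. *)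

theory Defs
  imports Main
begin

text \<open>A partition of n: a weakly decreasing list of positive integers summing to n.
  The list index is 0-based, so entry (i-1) of the list is the part lambda_i.\<close>
definition is_partition :: "nat \<Rightarrow> nat list \<Rightarrow> bool" where
  "is_partition n lam \<longleftrightarrow> sorted_wrt (\<ge>) lam \<and> (\<forall>x\<in>set lam. 0 < x) \<and> sum_list lam = n"

definition partitions :: "nat \<Rightarrow> nat list set" where
  "partitions n = {lam. is_partition n lam}"

definition first_col_hook :: "nat list \<Rightarrow> nat \<Rightarrow> int" where
  "first_col_hook lam i = int (lam ! (i - 1)) + (int (length lam) - int i)"

definition has_h_fixed_hook :: "int \<Rightarrow> nat list \<Rightarrow> bool" where
  "has_h_fixed_hook h lam \<longleftrightarrow> (\<exists>i. 1 \<le> i \<and> i \<le> length lam \<and> first_col_hook lam i = int i + h)"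

definition has_fixed_hook :: "nat list \<Rightarrow> bool" where
  "has_fixed_hook lam \<longleftrightarrow> has_h_fixed_hook 0 lam"

definition self_mult_parts :: "nat list \<Rightarrow> nat set" where
  "self_mult_parts lam = {i. 1 \<le> i \<and> count_list lam i = i}"

end

(*
  Since h_{i,1} - i = lambda_i + t - 2i strictly decreases in i, a partition has at most one
  fixed hook, and a fixed hook in row i with lambda_i = a forces t = a + 2b and i = a + b for
  some b >= 0.  These partitions are the concatenations of a + b - 1 parts >= a, the part a and
  b parts in [1, a].  The partitions in which a occurs exactly a times and exactly b parts exceed
  a are the concatenations of b parts > a, the block a^a and a partition into parts < a.
  With (x)_k = (1 - x) ... (1 - x^k), weakly decreasing k-tuples with entries <= r have the
  Gaussian coefficient (x)_(k+r) / ((x)_k (x)_r) as generating function, and so both classes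
  have generating function x^(a^2 + ab + b) / ((x)_b (x)_(a-1)).  Summing over (a, b) gives the
  theorem.
*)
theory Submission
  imports Defs "HOL-Computational_Algebra.Formal_Power_Series"
begin

unbundle fps_syntax

section \<open>Generating functions of weighted families of lists\<close>

definition count_fps :: "(nat \<Rightarrow> 'a set) \<Rightarrow> rat fps" where
  "count_fps S = Abs_fps (\<lambda>m. of_nat (card (S m)))"

lemma count_fps_nth [simp]: "count_fps S $ m = of_nat (card (S m))"
  by (simp add: count_fps_def)

lemma card_eq_if_count_fps_eq: "count_fps S = count_fps T \<Longrightarrow> card (S m) = card (T m)"
  by (metis count_fps_nth of_nat_eq_iff)

lemma count_fps_Un:
  assumes "\<And>m. S m = T m \<union> U m" "\<And>m. T m \<inter> U m = {}" "\<And>m. finite (T m)" "\<And>m. finite (U m)"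
  shows "count_fps S = count_fps T + count_fps U"
  by (rule fps_ext) (simp add: assms card_Un_disjoint)

text \<open>A weighted family maps \<open>m\<close> to a set of lists of sum \<open>m\<close>.\<close>

definition fam_append :: "(nat \<Rightarrow> nat list set) \<Rightarrow> (nat \<Rightarrow> nat list set) \<Rightarrow> nat \<Rightarrow> nat list set" where
  "fam_append A B m = {xs @ ys | xs ys. xs \<in> A (sum_list xs) \<and> ys \<in> B (sum_list ys) \<and> sum_list xs + sum_list ys = m}"

definition fam_const :: "nat list \<Rightarrow> nat \<Rightarrow> nat list set" where
  "fam_const c m = (if m = sum_list c then {c} else {})"

lemma mem_fam_append:
  "zs \<in> fam_append A B m \<longleftrightarrow>
    (\<exists>xs ys. zs = xs @ ys \<and> xs \<in> A (sum_list xs) \<and> ys \<in> B (sum_list ys) \<and> sum_list xs + sum_list ys = m)"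
  unfolding fam_append_def by blast

lemma mem_fam_append_const_left:
  "zs \<in> fam_append (fam_const c) B m \<longleftrightarrow>
    (\<exists>ys. zs = c @ ys \<and> ys \<in> B (sum_list ys) \<and> sum_list c + sum_list ys = m)"
  unfolding fam_append_def fam_const_def by auto

lemma mem_fam_append_const_right:
  "zs \<in> fam_append A (fam_const c) m \<longleftrightarrow>
    (\<exists>xs. zs = xs @ c \<and> xs \<in> A (sum_list xs) \<and> sum_list xs + sum_list c = m)"
  unfolding fam_append_def fam_const_def by auto

lemma sum_list_fam_append: "zs \<in> fam_append A B m \<Longrightarrow> sum_list zs = m"
  unfolding mem_fam_append by auto

lemma finite_fam_const: "finite (fam_const c m)"
  by (simp add: fam_const_def)

lemma finite_fam_append:
  assumes "\<And>x. finite (A x)" "\<And>y. finite (B y)"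
  shows "finite (fam_append A B m)"
proof -
  have "fam_append A B m \<subseteq> (\<lambda>(xs, ys). xs @ ys) ` (\<Union>i\<in>{0..m}. A i \<times> B (m - i))"
  proof
    fix zs assume "zs \<in> fam_append A B m"
    then obtain xs ys where "zs = xs @ ys" "xs \<in> A (sum_list xs)" "ys \<in> B (sum_list ys)"
      "sum_list xs + sum_list ys = m"
      unfolding mem_fam_append by blast
    then show "zs \<in> (\<lambda>(xs, ys). xs @ ys) ` (\<Union>i\<in>{0..m}. A i \<times> B (m - i))"
      by (intro image_eqI[of _ _ "(xs, ys)"]) auto
  qed
  moreover have "finite ((\<lambda>(xs, ys). xs @ ys) ` (\<Union>i\<in>{0..m}. A i \<times> B (m - i)))"
    using assms by auto
  ultimately show ?thesis by (rule finite_subset)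
qed

text \<open>The lists of \<open>A\<close> having a common length makes the factorisation \<open>xs @ ys\<close> unique.\<close>

lemma count_fps_fam_append:
  assumes A: "\<And>x xs. xs \<in> A x \<Longrightarrow> length xs = k \<and> sum_list xs = x"
    and B: "\<And>y ys. ys \<in> B y \<Longrightarrow> sum_list ys = y"
    and fin: "\<And>x. finite (A x)" "\<And>y. finite (B y)"
  shows "count_fps (fam_append A B) = count_fps A * count_fps B"
proof (rule fps_ext)
  fix m
  let ?app = "\<lambda>(xs, ys). xs @ ys"
  have eq: "fam_append A B m = (\<Union>i\<in>{0..m}. ?app ` (A i \<times> B (m - i)))"
  proof (intro set_eqI iffI)
    fix zs assume "zs \<in> fam_append A B m"
    then obtain xs ys where "zs = xs @ ys" "xs \<in> A (sum_list xs)" "ys \<in> B (sum_list ys)"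
      "sum_list xs + sum_list ys = m"
      unfolding mem_fam_append by blast
    then show "zs \<in> (\<Union>i\<in>{0..m}. ?app ` (A i \<times> B (m - i)))"
      by (intro UN_I[of "sum_list xs"]) (auto intro: image_eqI[of _ _ "(xs, ys)"])
  next
    fix zs assume "zs \<in> (\<Union>i\<in>{0..m}. ?app ` (A i \<times> B (m - i)))"
    then obtain i xs ys where "i \<le> m" "xs \<in> A i" "ys \<in> B (m - i)" "zs = xs @ ys" by auto
    moreover have "sum_list xs = i" "sum_list ys = m - i" using A B calculation by blast+
    ultimately show "zs \<in> fam_append A B m"
      unfolding mem_fam_append by (intro exI[of _ xs] exI[of _ ys]) auto
  qed
  have same_prefix: "xs = xs'" if "xs \<in> A i" "xs' \<in> A j" "xs @ ys = xs' @ ys'" for i j xs xs' ys ys'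
    using A[OF that(1)] A[OF that(2)] that(3) by (metis append_eq_append_conv)
  have inj: "inj_on ?app (A i \<times> B j)" for i j
    by (rule inj_onI) (auto dest: same_prefix)
  have disj: "?app ` (A i \<times> B (m - i)) \<inter> ?app ` (A j \<times> B (m - j)) = {}" if "i \<noteq> j" for i j
  proof (rule ccontr)
    assume "\<not> ?thesis"
    then obtain xs ys xs' ys' where xs: "xs \<in> A i" "xs' \<in> A j" "xs @ ys = xs' @ ys'" by auto
    then have "xs = xs'" by (rule same_prefix)
    with xs A that show False by metis
  qed
  have "card (fam_append A B m) = (\<Sum>i\<in>{0..m}. card (?app ` (A i \<times> B (m - i))))"
    unfolding eq by (rule card_UN_disjoint) (use fin disj in auto)
  also have "\<dots> = (\<Sum>i\<in>{0..m}. card (A i) * card (B (m - i)))"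
    by (simp add: card_image[OF inj] card_cartesian_product)
  finally show "count_fps (fam_append A B) $ m = (count_fps A * count_fps B) $ m"
    by (simp add: fps_mult_nth)
qed

lemma count_fps_fam_const: "count_fps (fam_const c) = fps_X ^ sum_list c"
  by (rule fps_ext) (simp add: fam_const_def fps_X_power_nth)

lemma count_fps_fam_append_const_left:
  assumes "\<And>y ys. ys \<in> B y \<Longrightarrow> sum_list ys = y" "\<And>y. finite (B y)"
  shows "count_fps (fam_append (fam_const c) B) = fps_X ^ sum_list c * count_fps B"
  by (subst count_fps_fam_append[where k = "length c"])
     (use assms in \<open>auto simp: count_fps_fam_const fam_const_def split: if_splits\<close>)

lemma count_fps_fam_append_const_right:
  assumes "\<And>x xs. xs \<in> A x \<Longrightarrow> length xs = k \<and> sum_list xs = x" "\<And>x. finite (A x)"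
  shows "count_fps (fam_append A (fam_const c)) = count_fps A * fps_X ^ sum_list c"
  by (subst count_fps_fam_append[where k = k])
     (use assms in \<open>auto simp: count_fps_fam_const fam_const_def split: if_splits\<close>)

section \<open>Weakly decreasing lists and the Gaussian binomial coefficients\<close>

definition dec_lists :: "nat \<Rightarrow> (nat \<Rightarrow> bool) \<Rightarrow> nat \<Rightarrow> nat list set" where
  "dec_lists k P m = {xs. length xs = k \<and> sorted_wrt (\<ge>) xs \<and> (\<forall>x\<in>set xs. P x) \<and> sum_list xs = m}"

definition bounded_partitions :: "nat \<Rightarrow> nat \<Rightarrow> nat list set" where
  "bounded_partitions r m = {lam \<in> partitions m. \<forall>x\<in>set lam. x \<le> r}"

fun qpoch :: "nat \<Rightarrow> rat fps" where
  "qpoch 0 = 1"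
| "qpoch (Suc k) = qpoch k * (1 - fps_X ^ Suc k)"

lemma qpoch_nonzero: "qpoch k \<noteq> 0"
proof -
  have "qpoch k $ 0 = 1" by (induction k) auto
  then show ?thesis by auto
qed

lemma length_mult_le_sum_list: "(\<forall>x\<in>set xs. c \<le> x) \<Longrightarrow> c * length xs \<le> sum_list (xs :: nat list)"
  by (induction xs) auto

lemma sum_list_map_add_const: "sum_list (map (\<lambda>x. x + c) xs) = sum_list xs + c * length (xs :: nat list)"
  by (induction xs) auto

lemma mem_dec_listsD: "xs \<in> dec_lists k P m \<Longrightarrow> length xs = k \<and> sum_list xs = m"
  unfolding dec_lists_def by auto

lemma finite_dec_lists: "finite (dec_lists k P m)"
proof -
  have "dec_lists k P m \<subseteq> {xs. set xs \<subseteq> {0..m} \<and> length xs = k}"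
    unfolding dec_lists_def using member_le_sum_list by fastforce
  then show ?thesis
    by (rule finite_subset) (rule finite_lists_length_eq, simp)
qed

lemma partitionsD:
  "lam \<in> partitions n \<Longrightarrow> sorted_wrt (\<ge>) lam \<and> (\<forall>x\<in>set lam. 1 \<le> x) \<and> sum_list lam = n"
  unfolding partitions_def is_partition_def by (auto simp: Suc_le_eq)

lemma length_partition: "lam \<in> partitions n \<Longrightarrow> length lam \<le> n"
  using partitionsD[of lam n] length_mult_le_sum_list[of lam 1] by simp

lemma part_le_partition: "lam \<in> partitions n \<Longrightarrow> x \<in> set lam \<Longrightarrow> x \<le> n"
  using partitionsD[of lam n] member_le_sum_list[of x lam] by simp

lemma finite_partitions: "finite (partitions n)"
proof -
  have "partitions n \<subseteq> {xs. set xs \<subseteq> {0..n} \<and> length xs \<le> n}"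
    using part_le_partition length_partition by fastforce
  then show ?thesis
    by (rule finite_subset) (rule finite_lists_length_le, simp)
qed

lemma finite_bounded_partitions: "finite (bounded_partitions r m)"
  unfolding bounded_partitions_def using finite_partitions by simp

lemma sum_list_bounded_partitions: "xs \<in> bounded_partitions r m \<Longrightarrow> sum_list xs = m"
  unfolding bounded_partitions_def partitions_def is_partition_def by auto

lemma sorted_desc_last_zero:
  assumes "sorted_wrt (\<ge>) xs" "(0::nat) \<in> set xs"
  shows "\<exists>ys. xs = ys @ [0]"
proof -
  have "last xs = 0"
    using assms by (induction xs) (auto simp: le_zero_eq)
  then show ?thesis
    using assms(2) by (metis append_butlast_last_id empty_iff list.set(1))
qed

lemma sorted_desc_hd_max:
  assumes "sorted_wrt (\<ge>) xs" "(c::nat) \<in> set xs" "\<forall>x\<in>set xs. x \<le> c"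
  shows "\<exists>ys. xs = c # ys"
  using assms by (cases xs) (auto intro: antisym)

lemma sorted_wrt_ge_map_mono:
  "sorted_wrt (\<ge>) xs \<Longrightarrow> mono f \<Longrightarrow> sorted_wrt (\<ge>) (map f xs)"
  unfolding sorted_wrt_map by (auto elim!: sorted_wrt_mono_rel[rotated] dest: monoD)

lemma dec_lists_shift_eq:
  assumes Q: "\<And>x. Q x \<longleftrightarrow> c \<le> x \<and> P (x - c)"
  shows "dec_lists k Q (m + c * k) = map (\<lambda>x. x + c) ` dec_lists k P m"
proof (intro set_eqI iffI)
  fix xs assume xs: "xs \<in> dec_lists k Q (m + c * k)"
  then have ge: "\<forall>x\<in>set xs. c \<le> x" unfolding dec_lists_def Q by auto
  then have "xs = map (\<lambda>x. x + c) (map (\<lambda>x. x - c) xs)" by (simp add: map_idI)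
  moreover have "sorted_wrt (\<ge>) (map (\<lambda>x. x - c) xs)"
    using xs by (intro sorted_wrt_ge_map_mono) (auto simp: dec_lists_def intro: monoI)
  moreover have "map (\<lambda>x. x - c) xs \<in> dec_lists k P m"
    using xs ge calculation(2) sum_list_map_add_const[of c "map (\<lambda>x. x - c) xs"]
    unfolding dec_lists_def Q by (auto simp: map_idI)
  ultimately show "xs \<in> map (\<lambda>x. x + c) ` dec_lists k P m" by blast
next
  fix ys assume "ys \<in> map (\<lambda>x. x + c) ` dec_lists k P m"
  then obtain xs where "xs \<in> dec_lists k P m" "ys = map (\<lambda>x. x + c) xs" by auto
  moreover have "sorted_wrt (\<ge>) (map (\<lambda>x. x + c) xs)"
    using calculation(1) by (intro sorted_wrt_ge_map_mono) (auto simp: dec_lists_def intro: monoI)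
  ultimately show "ys \<in> dec_lists k Q (m + c * k)"
    using sum_list_map_add_const[of c xs] unfolding dec_lists_def Q by auto
qed

lemma count_fps_dec_lists_shift:
  assumes Q: "\<And>x. Q x \<longleftrightarrow> c \<le> x \<and> P (x - c)"
  shows "count_fps (dec_lists k Q) = fps_X ^ (c * k) * count_fps (dec_lists k P)"
proof (rule fps_ext)
  fix m
  show "count_fps (dec_lists k Q) $ m = (fps_X ^ (c * k) * count_fps (dec_lists k P)) $ m"
  proof (cases "m < c * k")
    case True
    then have "dec_lists k Q m = {}"
      using length_mult_le_sum_list[of _ c] unfolding dec_lists_def Q by fastforce
    then show ?thesis using True by (simp add: fps_X_power_mult_nth)
  next
    case False
    then have "dec_lists k Q m = map (\<lambda>x. x + c) ` dec_lists k P (m - c * k)"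
      using dec_lists_shift_eq[OF Q, of k "m - c * k"] by simp
    moreover have "inj_on (map (\<lambda>x. x + c)) (dec_lists k P (m - c * k))"
      by (rule inj_on_subset[OF inj_mapI]) (auto intro: injI)
    ultimately show ?thesis using False
      by (simp add: fps_X_power_mult_nth card_image)
  qed
qed

lemma dec_lists_Suc_eq:
  "dec_lists (Suc k) (\<lambda>_. True) m
     = fam_append (dec_lists k (\<lambda>_. True)) (fam_const [0]) m \<union> dec_lists (Suc k) (\<lambda>x. 1 \<le> x) m"
  (is "_ = ?zero m \<union> _")
proof (intro set_eqI iffI)
  fix xs assume xs: "xs \<in> dec_lists (Suc k) (\<lambda>_. True) m"
  show "xs \<in> ?zero m \<union> dec_lists (Suc k) (\<lambda>x. 1 \<le> x) m"
  proof (cases "0 \<in> set xs")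
    case True
    then obtain ys where ys: "xs = ys @ [0]"
      using sorted_desc_last_zero xs unfolding dec_lists_def by blast
    with xs have "ys \<in> dec_lists k (\<lambda>_. True) (sum_list ys)" "sum_list ys = m"
      unfolding dec_lists_def by (auto simp: sorted_wrt_append)
    with ys show ?thesis by (auto simp: mem_fam_append_const_right)
  next
    case False
    then have "\<forall>x\<in>set xs. 1 \<le> x" by (metis less_one not_le)
    with xs show ?thesis unfolding dec_lists_def by auto
  qed
next
  fix xs assume "xs \<in> ?zero m \<union> dec_lists (Suc k) (\<lambda>x. 1 \<le> x) m"
  then show "xs \<in> dec_lists (Suc k) (\<lambda>_. True) m"
  proof
    assume "xs \<in> ?zero m"
    then obtain ys where "xs = ys @ [0]" "ys \<in> dec_lists k (\<lambda>_. True) (sum_list ys)" "sum_list ys = m"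
      unfolding mem_fam_append_const_right by auto
    then show ?thesis by (auto simp: dec_lists_def sorted_wrt_append)
  qed (auto simp: dec_lists_def)
qed

lemma count_fps_dec_lists_Suc:
  "count_fps (dec_lists (Suc k) (\<lambda>_. True))
     = count_fps (dec_lists k (\<lambda>_. True)) + fps_X ^ Suc k * count_fps (dec_lists (Suc k) (\<lambda>_. True))"
proof -
  let ?zero = "fam_append (dec_lists k (\<lambda>_. True)) (fam_const [0])"
  have disj: "?zero m \<inter> dec_lists (Suc k) (\<lambda>x. 1 \<le> x) m = {}" for m
  proof -
    have "0 \<in> set xs" if "xs \<in> ?zero m" for xs
      using that unfolding mem_fam_append_const_right by auto
    moreover have "0 \<notin> set xs" if "xs \<in> dec_lists (Suc k) (\<lambda>x. 1 \<le> x) m" for xs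
      using that unfolding dec_lists_def by auto
    ultimately show ?thesis by blast
  qed
  have "count_fps (dec_lists (Suc k) (\<lambda>_. True))
      = count_fps ?zero + count_fps (dec_lists (Suc k) (\<lambda>x. 1 \<le> x))"
    by (rule count_fps_Un[OF dec_lists_Suc_eq disj finite_fam_append finite_dec_lists])
      (intro finite_dec_lists finite_fam_const)+
  also have "count_fps ?zero = count_fps (dec_lists k (\<lambda>_. True))"
    using count_fps_fam_append_const_right[OF mem_dec_listsD finite_dec_lists] by simp
  also have "count_fps (dec_lists (Suc k) (\<lambda>x. 1 \<le> x))
      = fps_X ^ Suc k * count_fps (dec_lists (Suc k) (\<lambda>_. True))"
    by (subst count_fps_dec_lists_shift[where c = 1 and P = "\<lambda>_. True"]) auto
  finally show ?thesis .
qed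
lemma count_fps_dec_lists_qpoch: "count_fps (dec_lists k (\<lambda>_. True)) * qpoch k = 1"
proof (induction k)
  case 0
  have "dec_lists 0 (\<lambda>_. True) m = (if m = 0 then {[]} else {})" for m
    unfolding dec_lists_def by auto
  then show ?case by (intro fps_ext) simp
next
  case (Suc k)
  have rec: "count_fps (dec_lists (Suc k) (\<lambda>_. True)) * (1 - fps_X ^ Suc k) = count_fps (dec_lists k (\<lambda>_. True))"
    using count_fps_dec_lists_Suc[of k] by (simp add: algebra_simps)
  have "count_fps (dec_lists (Suc k) (\<lambda>_. True)) * qpoch (Suc k)
      = (count_fps (dec_lists (Suc k) (\<lambda>_. True)) * (1 - fps_X ^ Suc k)) * qpoch k"
    by (simp only: qpoch.simps ac_simps)
  then show ?case unfolding rec Suc.IH .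
qed

lemma bounded_partitions_Suc_eq:
  "bounded_partitions (Suc r) m
     = bounded_partitions r m \<union> fam_append (fam_const [Suc r]) (bounded_partitions (Suc r)) m"
  (is "_ = _ \<union> ?top m")
proof (intro set_eqI iffI)
  fix xs assume xs: "xs \<in> bounded_partitions (Suc r) m"
  show "xs \<in> bounded_partitions r m \<union> ?top m"
  proof (cases "Suc r \<in> set xs")
    case True
    then obtain ys where ys: "xs = Suc r # ys"
      using sorted_desc_hd_max xs unfolding bounded_partitions_def partitions_def is_partition_def by blast
    with xs have "ys \<in> bounded_partitions (Suc r) (sum_list ys)" "Suc r + sum_list ys = m"
      unfolding bounded_partitions_def partitions_def is_partition_def by auto
    with ys show ?thesis by (auto simp: mem_fam_append_const_left)
  next
    case False
    with xs have "xs \<in> bounded_partitions r m"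
      unfolding bounded_partitions_def by (fastforce simp: le_Suc_eq)
    then show ?thesis by blast
  qed
next
  fix xs assume "xs \<in> bounded_partitions r m \<union> ?top m"
  then show "xs \<in> bounded_partitions (Suc r) m"
  proof
    assume "xs \<in> ?top m"
    then obtain ys where "xs = Suc r # ys" "ys \<in> bounded_partitions (Suc r) (sum_list ys)"
      "Suc r + sum_list ys = m"
      unfolding mem_fam_append_const_left by auto
    then show ?thesis by (auto simp: bounded_partitions_def partitions_def is_partition_def)
  qed (auto simp: bounded_partitions_def)
qed

lemma count_fps_bounded_partitions_Suc:
  "count_fps (bounded_partitions (Suc r))
     = count_fps (bounded_partitions r) + fps_X ^ Suc r * count_fps (bounded_partitions (Suc r))"
proof -
  let ?top = "fam_append (fam_const [Suc r]) (bounded_partitions (Suc r))"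
  have disj: "bounded_partitions r m \<inter> ?top m = {}" for m
  proof -
    have "Suc r \<in> set xs" if "xs \<in> ?top m" for xs
      using that unfolding mem_fam_append_const_left by auto
    moreover have "Suc r \<notin> set xs" if "xs \<in> bounded_partitions r m" for xs
      using that unfolding bounded_partitions_def by auto
    ultimately show ?thesis by blast
  qed
  have "count_fps (bounded_partitions (Suc r)) = count_fps (bounded_partitions r) + count_fps ?top"
    by (rule count_fps_Un[OF bounded_partitions_Suc_eq disj finite_bounded_partitions])
      (intro finite_fam_append finite_bounded_partitions finite_fam_const)
  also have "count_fps ?top = fps_X ^ Suc r * count_fps (bounded_partitions (Suc r))"
    using count_fps_fam_append_const_left[OF sum_list_bounded_partitions finite_bounded_partitions] by simp
  finally show ?thesis .
qed

lemma count_fps_bounded_partitions_qpoch: "count_fps (bounded_partitions r) * qpoch r = 1"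
proof (induction r)
  case 0
  have "xs \<in> bounded_partitions 0 m \<longleftrightarrow> m = 0 \<and> xs = []" for xs m
    unfolding bounded_partitions_def partitions_def is_partition_def by (cases xs) auto
  then have "bounded_partitions 0 m = (if m = 0 then {[]} else {})" for m
    by auto
  then show ?case by (intro fps_ext) simp
next
  case (Suc r)
  have rec: "count_fps (bounded_partitions (Suc r)) * (1 - fps_X ^ Suc r) = count_fps (bounded_partitions r)"
    using count_fps_bounded_partitions_Suc[of r] by (simp add: algebra_simps)
  have "count_fps (bounded_partitions (Suc r)) * qpoch (Suc r)
      = (count_fps (bounded_partitions (Suc r)) * (1 - fps_X ^ Suc r)) * qpoch r"
    by (simp only: qpoch.simps ac_simps)
  then show ?case unfolding rec Suc.IH .
qed

lemma dec_lists_le_Suc_eq: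
  "dec_lists (Suc s) (\<lambda>x. x \<le> Suc r) m
     = dec_lists (Suc s) (\<lambda>x. x \<le> r) m \<union> fam_append (fam_const [Suc r]) (dec_lists s (\<lambda>x. x \<le> Suc r)) m"
  (is "_ = _ \<union> ?top m")
proof (intro set_eqI iffI)
  fix xs assume xs: "xs \<in> dec_lists (Suc s) (\<lambda>x. x \<le> Suc r) m"
  show "xs \<in> dec_lists (Suc s) (\<lambda>x. x \<le> r) m \<union> ?top m"
  proof (cases "Suc r \<in> set xs")
    case True
    then obtain ys where ys: "xs = Suc r # ys"
      using sorted_desc_hd_max xs unfolding dec_lists_def by blast
    with xs have "ys \<in> dec_lists s (\<lambda>x. x \<le> Suc r) (sum_list ys)" "Suc r + sum_list ys = m"
      unfolding dec_lists_def by auto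
    with ys show ?thesis by (auto simp: mem_fam_append_const_left)
  next
    case False
    with xs have "xs \<in> dec_lists (Suc s) (\<lambda>x. x \<le> r) m"
      unfolding dec_lists_def by (fastforce simp: le_Suc_eq)
    then show ?thesis by blast
  qed
next
  fix xs assume "xs \<in> dec_lists (Suc s) (\<lambda>x. x \<le> r) m \<union> ?top m"
  then show "xs \<in> dec_lists (Suc s) (\<lambda>x. x \<le> Suc r) m"
  proof
    assume "xs \<in> ?top m"
    then obtain ys where "xs = Suc r # ys" "ys \<in> dec_lists s (\<lambda>x. x \<le> Suc r) (sum_list ys)"
      "Suc r + sum_list ys = m"
      unfolding mem_fam_append_const_left by auto
    then show ?thesis by (auto simp: dec_lists_def)
  qed (auto simp: dec_lists_def)
qed

lemma count_fps_dec_lists_le_Suc: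
  "count_fps (dec_lists (Suc s) (\<lambda>x. x \<le> Suc r))
     = count_fps (dec_lists (Suc s) (\<lambda>x. x \<le> r)) + fps_X ^ Suc r * count_fps (dec_lists s (\<lambda>x. x \<le> Suc r))"
proof -
  let ?top = "fam_append (fam_const [Suc r]) (dec_lists s (\<lambda>x. x \<le> Suc r))"
  have disj: "dec_lists (Suc s) (\<lambda>x. x \<le> r) m \<inter> ?top m = {}" for m
  proof -
    have "Suc r \<in> set xs" if "xs \<in> ?top m" for xs
      using that unfolding mem_fam_append_const_left by auto
    moreover have "Suc r \<notin> set xs" if "xs \<in> dec_lists (Suc s) (\<lambda>x. x \<le> r) m" for xs
      using that unfolding dec_lists_def by auto
    ultimately show ?thesis by blast
  qed
  have "count_fps (dec_lists (Suc s) (\<lambda>x. x \<le> Suc r))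
      = count_fps (dec_lists (Suc s) (\<lambda>x. x \<le> r)) + count_fps ?top"
    by (rule count_fps_Un[OF dec_lists_le_Suc_eq disj finite_dec_lists])
      (intro finite_fam_append finite_dec_lists finite_fam_const)
  also have "count_fps ?top = fps_X ^ Suc r * count_fps (dec_lists s (\<lambda>x. x \<le> Suc r))"
    using count_fps_fam_append_const_left[OF conjunct2[OF mem_dec_listsD] finite_dec_lists] by simp
  finally show ?thesis .
qed

lemma dec_lists_le_zero: "dec_lists s (\<lambda>x. x \<le> 0) m = (if m = 0 then {replicate s 0} else {})"
proof -
  have "xs \<in> dec_lists s (\<lambda>x. x \<le> 0) m \<longleftrightarrow> m = 0 \<and> xs = replicate s 0" for xs
  proof
    assume "xs \<in> dec_lists s (\<lambda>x. x \<le> 0) m"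
    then have "xs = replicate s 0" "sum_list xs = m"
      unfolding dec_lists_def using replicate_length_same[of xs 0] by auto
    then show "m = 0 \<and> xs = replicate s 0" by (simp add: sum_list_replicate)
  qed (auto simp: dec_lists_def sorted_wrt_iff_nth_less)
  then show ?thesis by auto
qed

lemma count_fps_dec_lists_le_zero: "count_fps (dec_lists s (\<lambda>x. x \<le> 0)) = 1"
  by (rule fps_ext) (simp only: count_fps_nth dec_lists_le_zero, simp)

text \<open>The generating function of \<open>dec_lists s (\<lambda>x. x \<le> r)\<close> is the Gaussian binomial
  coefficient \<open>[s + r choose s]\<close>.\<close>

lemma count_fps_dec_lists_le_qpoch:
  "count_fps (dec_lists s (\<lambda>x. x \<le> r)) * qpoch s * qpoch r = qpoch (s + r)"
proof (induction s arbitrary: r)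
  case 0
  have "dec_lists 0 (\<lambda>x. x \<le> r) m = (if m = 0 then {[]} else {})" for m
    unfolding dec_lists_def by auto
  then show ?case by (simp add: fps_ext)
next
  case (Suc s)
  note IH_s = Suc.IH
  show ?case
  proof (induction r)
    case 0
    show ?case unfolding count_fps_dec_lists_le_zero by simp
  next
    case (Suc r)
    define Q where "Q = qpoch (Suc (s + r))"
    have IH1: "count_fps (dec_lists (Suc s) (\<lambda>x. x \<le> r)) * qpoch (Suc s) * qpoch r = Q"
      using Suc.IH unfolding Q_def by simp
    have IH2: "count_fps (dec_lists s (\<lambda>x. x \<le> Suc r)) * qpoch s * qpoch (Suc r) = Q"
      using IH_s[of "Suc r"] unfolding Q_def by simp
    have "count_fps (dec_lists (Suc s) (\<lambda>x. x \<le> Suc r)) * qpoch (Suc s) * qpoch (Suc r)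
        = (count_fps (dec_lists (Suc s) (\<lambda>x. x \<le> r)) * qpoch (Suc s) * qpoch r) * (1 - fps_X ^ Suc r)
          + fps_X ^ Suc r * (count_fps (dec_lists s (\<lambda>x. x \<le> Suc r)) * qpoch s * qpoch (Suc r))
            * (1 - fps_X ^ Suc s)"
      unfolding count_fps_dec_lists_le_Suc by (simp only: qpoch.simps) (simp add: algebra_simps)
    also have "\<dots> = Q * (1 - fps_X ^ Suc r * fps_X ^ Suc s)"
      unfolding IH1 IH2 by (simp add: algebra_simps)
    also have "fps_X ^ Suc r * fps_X ^ Suc s = (fps_X :: rat fps) ^ Suc (Suc (s + r))"
      by (simp add: power_add[symmetric])
    finally show ?case unfolding Q_def by simp
  qed
qed

lemma count_fps_dec_lists_exchange:
  "count_fps (dec_lists (s + r) (\<lambda>_. True)) * count_fps (dec_lists s (\<lambda>x. x \<le> r))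
     = count_fps (dec_lists s (\<lambda>_. True)) * count_fps (bounded_partitions r)"
proof -
  define T where "T = qpoch s * qpoch r * qpoch (s + r)"
  have "(count_fps (dec_lists (s + r) (\<lambda>_. True)) * count_fps (dec_lists s (\<lambda>x. x \<le> r))) * T
      = (count_fps (dec_lists (s + r) (\<lambda>_. True)) * qpoch (s + r))
        * (count_fps (dec_lists s (\<lambda>x. x \<le> r)) * qpoch s * qpoch r)"
    unfolding T_def by (simp add: ac_simps)
  also have "\<dots> = qpoch (s + r)"
    by (simp add: count_fps_dec_lists_qpoch count_fps_dec_lists_le_qpoch)
  also have "\<dots> = (count_fps (dec_lists s (\<lambda>_. True)) * qpoch s)
        * (count_fps (bounded_partitions r) * qpoch r) * qpoch (s + r)"
    by (simp add: count_fps_dec_lists_qpoch count_fps_bounded_partitions_qpoch)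
  also have "\<dots> = (count_fps (dec_lists s (\<lambda>_. True)) * count_fps (bounded_partitions r)) * T"
    unfolding T_def by (simp add: ac_simps)
  finally show ?thesis
    using qpoch_nonzero unfolding T_def by (simp add: mult_right_cancel)
qed

section \<open>Fixed hooks and parts of multiplicity equal to their size\<close>

text \<open>Partitions with a fixed hook in row \<open>a + b\<close> and part \<open>a\<close> there; the hook condition forces \<open>a + 2 b\<close> parts.\<close>

definition fixed_hook_partitions :: "nat \<Rightarrow> nat \<Rightarrow> nat \<Rightarrow> nat list set" where
  "fixed_hook_partitions a b n = {lam \<in> partitions n. length lam = a + 2 * b \<and> lam ! (a + b - 1) = a}"

definition self_mult_partitions :: "nat \<Rightarrow> nat \<Rightarrow> nat \<Rightarrow> nat list set" where
  "self_mult_partitions a b n =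
     {lam \<in> partitions n. count_list lam a = a \<and> length (filter (\<lambda>x. a < x) lam) = b}"

lemma sorted_desc_eq_filter_split:
  "sorted_wrt (\<ge>) (lam :: nat list) \<Longrightarrow>
     lam = filter (\<lambda>x. a < x) lam @ replicate (count_list lam a) a @ filter (\<lambda>x. x < a) lam"
proof (induction lam)
  case (Cons x xs)
  then have IH: "xs = filter (\<lambda>x. a < x) xs @ replicate (count_list xs a) a @ filter (\<lambda>x. x < a) xs"
    and le: "\<forall>y\<in>set xs. y \<le> x" by simp_all
  consider "a < x" | "x = a" | "x < a" by linarith
  then show ?case
  proof cases
    case 2
    then have "filter (\<lambda>x. a < x) xs = []" using le by (auto simp: filter_empty_conv)
    with 2 IH show ?thesis by simp
  next
    case 3
    then have "\<forall>y\<in>set xs. y < a" using le by auto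
    then have "filter (\<lambda>x. a < x) xs = []" "count_list xs a = 0" "filter (\<lambda>x. x < a) xs = xs"
      by (auto simp: filter_empty_conv count_list_0_iff)
    with 3 show ?thesis by simp
  qed (use IH in simp)
qed simp

lemma fixed_hook_partitions_eq_fam_append:
  assumes a: "1 \<le> a"
  shows "fixed_hook_partitions a b n
    = fam_append (dec_lists (a + b - 1) (\<lambda>x. a \<le> x))
        (fam_append (fam_const [a]) (dec_lists b (\<lambda>x. 1 \<le> x \<and> x \<le> a))) n"
proof (intro set_eqI iffI)
  fix lam assume lam: "lam \<in> fixed_hook_partitions a b n"
  define i where "i = a + b - 1"
  have i: "i < length lam" "lam ! i = a"
    using lam a unfolding fixed_hook_partitions_def i_def by auto
  define xs where "xs = take i lam"
  define ys where "ys = drop (Suc i) lam"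
  have lam_eq: "lam = xs @ a # ys"
    unfolding xs_def ys_def using id_take_nth_drop[OF i(1)] unfolding i(2) .
  have "length xs = i" "length ys = b"
    using lam a i(1) unfolding xs_def ys_def fixed_hook_partitions_def i_def by auto
  moreover have "sorted_wrt (\<ge>) (xs @ a # ys)" "\<forall>x\<in>set (xs @ a # ys). 0 < x"
    and sum: "sum_list (xs @ a # ys) = n"
    using lam unfolding lam_eq fixed_hook_partitions_def partitions_def is_partition_def by auto
  ultimately have xs: "xs \<in> dec_lists i (\<lambda>x. a \<le> x) (sum_list xs)"
    and ys: "ys \<in> dec_lists b (\<lambda>x. 1 \<le> x \<and> x \<le> a) (sum_list ys)"
    by (auto simp: dec_lists_def sorted_wrt_append Suc_le_eq)
  then have "a # ys \<in> fam_append (fam_const [a]) (dec_lists b (\<lambda>x. 1 \<le> x \<and> x \<le> a)) (sum_list (a # ys))"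
    unfolding mem_fam_append_const_left by simp
  with xs sum show "lam \<in> fam_append (dec_lists (a + b - 1) (\<lambda>x. a \<le> x))
      (fam_append (fam_const [a]) (dec_lists b (\<lambda>x. 1 \<le> x \<and> x \<le> a))) n"
    unfolding mem_fam_append i_def[symmetric] lam_eq
    by (intro exI[of _ xs] exI[of _ "a # ys"]) simp
next
  fix lam assume "lam \<in> fam_append (dec_lists (a + b - 1) (\<lambda>x. a \<le> x))
      (fam_append (fam_const [a]) (dec_lists b (\<lambda>x. 1 \<le> x \<and> x \<le> a))) n"
  then obtain xs ws where lam_ws: "lam = xs @ ws"
    and xs: "xs \<in> dec_lists (a + b - 1) (\<lambda>x. a \<le> x) (sum_list xs)"
    and ws: "ws \<in> fam_append (fam_const [a]) (dec_lists b (\<lambda>x. 1 \<le> x \<and> x \<le> a)) (sum_list ws)"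
    and sum_ws: "sum_list xs + sum_list ws = n"
    unfolding mem_fam_append by blast
  from ws obtain ys where ws_eq: "ws = [a] @ ys"
    and ys: "ys \<in> dec_lists b (\<lambda>x. 1 \<le> x \<and> x \<le> a) (sum_list ys)"
    unfolding mem_fam_append_const_left by blast
  have lam_eq: "lam = xs @ a # ys" and sum: "sum_list xs + (a + sum_list ys) = n"
    using lam_ws sum_ws unfolding ws_eq by simp_all
  have xs_ge: "\<forall>x\<in>set xs. a \<le> x" and ys_le: "\<forall>y\<in>set ys. 0 < y \<and> y \<le> a"
    using xs ys unfolding dec_lists_def by auto
  then have "\<forall>x\<in>set xs. \<forall>y\<in>set (a # ys). y \<le> x"
    by (fastforce intro: order_trans)
  with xs ys have "sorted_wrt (\<ge>) lam"
    unfolding lam_eq dec_lists_def by (simp add: sorted_wrt_append)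
  with xs_ge ys_le sum a have "is_partition n lam"
    unfolding lam_eq is_partition_def by auto
  moreover have "length lam = a + 2 * b" "lam ! (a + b - 1) = a"
    using xs ys a unfolding lam_eq dec_lists_def by (auto simp: nth_append)
  ultimately show "lam \<in> fixed_hook_partitions a b n"
    unfolding fixed_hook_partitions_def partitions_def by simp
qed

lemma self_mult_partitions_eq_fam_append:
  assumes a: "1 \<le> a"
  shows "self_mult_partitions a b n
    = fam_append (dec_lists b (\<lambda>x. a < x))
        (fam_append (fam_const (replicate a a)) (bounded_partitions (a - 1))) n"
proof (intro set_eqI iffI)
  fix lam assume lam: "lam \<in> self_mult_partitions a b n"
  then have p: "sorted_wrt (\<ge>) lam" "\<forall>x\<in>set lam. 0 < x" "sum_list lam = n" "count_list lam a = a"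
    "length (filter (\<lambda>x. a < x) lam) = b"
    unfolding self_mult_partitions_def partitions_def is_partition_def by auto
  define xs where "xs = filter (\<lambda>x. a < x) lam"
  define zs where "zs = filter (\<lambda>x. x < a) lam"
  have lam_eq: "lam = xs @ replicate a a @ zs"
    unfolding xs_def zs_def using sorted_desc_eq_filter_split[OF p(1), of a] unfolding p(4) .
  have xs: "xs \<in> dec_lists b (\<lambda>x. a < x) (sum_list xs)"
    using p unfolding dec_lists_def xs_def by (auto simp: sorted_wrt_filter)
  have "zs \<in> bounded_partitions (a - 1) (sum_list zs)"
    using p unfolding bounded_partitions_def partitions_def is_partition_def zs_def
    by (auto simp: sorted_wrt_filter)
  then have "replicate a a @ zs \<in> fam_append (fam_const (replicate a a)) (bounded_partitions (a - 1))
      (sum_list (replicate a a @ zs))"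
    unfolding mem_fam_append_const_left by simp
  with xs p(3) show "lam \<in> fam_append (dec_lists b (\<lambda>x. a < x))
      (fam_append (fam_const (replicate a a)) (bounded_partitions (a - 1))) n"
    unfolding mem_fam_append lam_eq
    by (intro exI[of _ xs] exI[of _ "replicate a a @ zs"]) simp
next
  fix lam assume "lam \<in> fam_append (dec_lists b (\<lambda>x. a < x))
      (fam_append (fam_const (replicate a a)) (bounded_partitions (a - 1))) n"
  then obtain xs ws where lam_ws: "lam = xs @ ws"
    and xs: "xs \<in> dec_lists b (\<lambda>x. a < x) (sum_list xs)"
    and ws: "ws \<in> fam_append (fam_const (replicate a a)) (bounded_partitions (a - 1)) (sum_list ws)"
    and sum_ws: "sum_list xs + sum_list ws = n"
    unfolding mem_fam_append by blast
  from ws obtain zs where ws_eq: "ws = replicate a a @ zs"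
    and zs: "zs \<in> bounded_partitions (a - 1) (sum_list zs)"
    unfolding mem_fam_append_const_left by blast
  have lam_eq: "lam = xs @ replicate a a @ zs"
    and sum: "sum_list xs + (sum_list (replicate a a) + sum_list zs) = n"
    using lam_ws sum_ws unfolding ws_eq by simp_all
  have xa: "\<forall>x\<in>set xs. a < x" and za: "\<forall>z\<in>set zs. 0 < z \<and> z < a"
    using xs zs a unfolding dec_lists_def bounded_partitions_def partitions_def is_partition_def
    by auto
  have "sorted_wrt (\<ge>) xs" "sorted_wrt (\<ge>) zs" "sorted_wrt (\<ge>) (replicate a a)"
    using xs zs unfolding dec_lists_def bounded_partitions_def partitions_def is_partition_def
    by (auto simp: sorted_wrt_iff_nth_less)
  moreover have "\<forall>x\<in>set xs. \<forall>y\<in>set (replicate a a @ zs). y \<le> x"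
    using xa za by fastforce
  ultimately have "sorted_wrt (\<ge>) lam"
    using za unfolding lam_eq by (auto simp: sorted_wrt_append less_imp_le)
  then have "is_partition n lam"
    using xa za sum a unfolding lam_eq is_partition_def by auto
  moreover have "count_list lam a = a"
  proof -
    have "count_list (replicate k a) a = k" for k
      by (induction k) auto
    moreover have "a \<notin> set xs" "a \<notin> set zs"
      using xa za by auto
    ultimately show ?thesis unfolding lam_eq by simp
  qed
  moreover have "filter (\<lambda>x. a < x) lam = xs"
    using xa za unfolding lam_eq by (auto simp: filter_empty_conv)
  ultimately show "lam \<in> self_mult_partitions a b n"
    using xs unfolding self_mult_partitions_def partitions_def dec_lists_def by simp
qed

lemma count_fps_fixed_hook_partitions:
  assumes a: "1 \<le> a"
  shows "count_fps (fixed_hook_partitions a b)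
    = fps_X ^ (a * a + a * b + b) * (count_fps (dec_lists b (\<lambda>_. True)) * count_fps (bounded_partitions (a - 1)))"
proof -
  let ?E = "\<lambda>k. count_fps (dec_lists k (\<lambda>_. True))"
  have "count_fps (fixed_hook_partitions a b) = count_fps (fam_append (dec_lists (a + b - 1) (\<lambda>x. a \<le> x))
      (fam_append (fam_const [a]) (dec_lists b (\<lambda>x. 1 \<le> x \<and> x \<le> a))))"
    using fixed_hook_partitions_eq_fam_append[OF a] by metis
  also have "\<dots> = count_fps (dec_lists (a + b - 1) (\<lambda>x. a \<le> x))
      * count_fps (fam_append (fam_const [a]) (dec_lists b (\<lambda>x. 1 \<le> x \<and> x \<le> a)))"
    by (rule count_fps_fam_append[where k = "a + b - 1"])
      (auto dest: mem_dec_listsD sum_list_fam_append intro!: finite_dec_lists finite_fam_append finite_fam_const)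
  also have "count_fps (fam_append (fam_const [a]) (dec_lists b (\<lambda>x. 1 \<le> x \<and> x \<le> a)))
      = fps_X ^ a * count_fps (dec_lists b (\<lambda>x. 1 \<le> x \<and> x \<le> a))"
    using count_fps_fam_append_const_left[OF conjunct2[OF mem_dec_listsD] finite_dec_lists] by simp
  also have "count_fps (dec_lists (a + b - 1) (\<lambda>x. a \<le> x)) = fps_X ^ (a * (b + (a - 1))) * ?E (b + (a - 1))"
  proof -
    have "a + b - 1 = b + (a - 1)" using a by simp
    then show ?thesis by (simp only:) (rule count_fps_dec_lists_shift, simp)
  qed
  also have "count_fps (dec_lists b (\<lambda>x. 1 \<le> x \<and> x \<le> a))
      = fps_X ^ (1 * b) * count_fps (dec_lists b (\<lambda>x. x \<le> a - 1))"
    by (rule count_fps_dec_lists_shift) (use a in auto)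
  also have "fps_X ^ (a * (b + (a - 1))) * ?E (b + (a - 1)) * (fps_X ^ a * (fps_X ^ (1 * b) * count_fps (dec_lists b (\<lambda>x. x \<le> a - 1))))
      = fps_X ^ (a * (b + (a - 1)) + a + 1 * b) * (?E (b + (a - 1)) * count_fps (dec_lists b (\<lambda>x. x \<le> a - 1)))"
    by (simp only: power_add mult_ac)
  also have "a * (b + (a - 1)) + a + 1 * b = a * a + a * b + b"
    using a by (cases a) (auto simp: algebra_simps)
  finally show ?thesis
    by (simp only: count_fps_dec_lists_exchange)
qed

lemma count_fps_self_mult_partitions:
  assumes a: "1 \<le> a"
  shows "count_fps (self_mult_partitions a b)
    = fps_X ^ (a * a + a * b + b) * (count_fps (dec_lists b (\<lambda>_. True)) * count_fps (bounded_partitions (a - 1)))"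
proof -
  have "count_fps (self_mult_partitions a b) = count_fps (fam_append (dec_lists b (\<lambda>x. a < x))
      (fam_append (fam_const (replicate a a)) (bounded_partitions (a - 1))))"
    using self_mult_partitions_eq_fam_append[OF a] by metis
  also have "\<dots> = count_fps (dec_lists b (\<lambda>x. a < x))
      * count_fps (fam_append (fam_const (replicate a a)) (bounded_partitions (a - 1)))"
    by (rule count_fps_fam_append[where k = b])
      (auto dest: mem_dec_listsD sum_list_fam_append
        intro!: finite_dec_lists finite_fam_append finite_fam_const finite_bounded_partitions)
  also have "count_fps (fam_append (fam_const (replicate a a)) (bounded_partitions (a - 1)))
      = fps_X ^ (a * a) * count_fps (bounded_partitions (a - 1))"
    using count_fps_fam_append_const_left[OF sum_list_bounded_partitions finite_bounded_partitions]
    by (simp add: sum_list_replicate)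
  also have "count_fps (dec_lists b (\<lambda>x. a < x)) = fps_X ^ ((a + 1) * b) * count_fps (dec_lists b (\<lambda>_. True))"
    by (rule count_fps_dec_lists_shift) auto
  also have "fps_X ^ ((a + 1) * b) * count_fps (dec_lists b (\<lambda>_. True))
      * (fps_X ^ (a * a) * count_fps (bounded_partitions (a - 1)))
      = fps_X ^ ((a + 1) * b + a * a) * (count_fps (dec_lists b (\<lambda>_. True)) * count_fps (bounded_partitions (a - 1)))"
    by (simp only: power_add mult_ac)
  also have "(a + 1) * b + a * a = a * a + a * b + b"
    by (simp add: algebra_simps)
  finally show ?thesis .
qed

section \<open>Summing over all parameters\<close>

lemma fixed_hook_row_unique:
  assumes sorted: "sorted_wrt (\<ge>) lam"
    and i: "1 \<le> i" "i \<le> length lam" "lam ! (i - 1) + length lam = 2 * i"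
    and j: "1 \<le> j" "j \<le> length lam" "lam ! (j - 1) + length lam = 2 * j"
  shows "i = j"
proof -
  have no_lt: False if "k < l" "1 \<le> k" "l \<le> length lam"
    "lam ! (k - 1) + length lam = 2 * k" "lam ! (l - 1) + length lam = 2 * l" for k l
  proof -
    have "k - 1 < l - 1" "l - 1 < length lam" using that by linarith+
    then have "lam ! (l - 1) \<le> lam ! (k - 1)" by (rule sorted_wrt_nth_less[OF sorted])
    with that show False by linarith
  qed
  show ?thesis
  proof (cases i j rule: linorder_cases)
    case less
    with i j no_lt[of i j] show ?thesis by blast
  next
    case greater
    with i j no_lt[of j i] show ?thesis by blast
  qed
qed

lemma has_fixed_hook_iff:
  assumes lam: "lam \<in> partitions n"
  shows "has_fixed_hook lam \<longleftrightarrow> (\<exists>a\<in>{1..n}. \<exists>b\<in>{0..n}. lam \<in> fixed_hook_partitions a b n)"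
proof
  assume "has_fixed_hook lam"
  then obtain i where i: "1 \<le> i" "i \<le> length lam"
    and "int (lam ! (i - 1)) + (int (length lam) - int i) = int i"
    unfolding has_fixed_hook_def has_h_fixed_hook_def first_col_hook_def by auto
  then have i_hook: "lam ! (i - 1) + length lam = 2 * i" by linarith
  define a where "a = lam ! (i - 1)"
  have "a \<in> set lam" unfolding a_def using i by auto
  then have "1 \<le> a" "a \<le> n"
    using partitionsD[OF lam] part_le_partition[OF lam] by auto
  moreover have "length lam = a + 2 * (i - a)" "lam ! (a + (i - a) - 1) = a" "i - a \<le> n"
    using i i_hook length_partition[OF lam] unfolding a_def by auto
  ultimately show "\<exists>a\<in>{1..n}. \<exists>b\<in>{0..n}. lam \<in> fixed_hook_partitions a b n"
    using lam unfolding fixed_hook_partitions_def by (intro bexI[of _ a] bexI[of _ "i - a"]) auto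
next
  assume "\<exists>a\<in>{1..n}. \<exists>b\<in>{0..n}. lam \<in> fixed_hook_partitions a b n"
  then obtain a b where ab: "1 \<le> a" "length lam = a + 2 * b" "lam ! (a + b - 1) = a"
    unfolding fixed_hook_partitions_def by auto
  then have "int (lam ! (a + b - 1)) + (int (length lam) - int (a + b)) = int (a + b) + 0"
    by simp
  with ab show "has_fixed_hook lam"
    unfolding has_fixed_hook_def has_h_fixed_hook_def first_col_hook_def
    by (intro exI[of _ "a + b"]) auto
qed

lemma fixed_hook_partitions_unique:
  assumes "lam \<in> fixed_hook_partitions a b n" "lam \<in> fixed_hook_partitions a' b' n" "1 \<le> a" "1 \<le> a'"
  shows "a = a' \<and> b = b'"
proof -
  have lam: "sorted_wrt (\<ge>) lam" "length lam = a + 2 * b" "lam ! (a + b - 1) = a"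
    "length lam = a' + 2 * b'" "lam ! (a' + b' - 1) = a'"
    using assms(1,2) unfolding fixed_hook_partitions_def partitions_def is_partition_def by auto
  have "a + b = a' + b'"
    by (rule fixed_hook_row_unique[OF lam(1)]) (use lam assms(3,4) in simp_all)
  with lam show ?thesis by simp
qed

lemma card_fixed_hook_eq_sum:
  "card {lam \<in> partitions n. has_fixed_hook lam}
     = (\<Sum>a\<in>{1..n}. \<Sum>b\<in>{0..n}. card (fixed_hook_partitions a b n))"
proof -
  have fin: "finite (fixed_hook_partitions a b n)" for a b
    using finite_partitions by (simp add: fixed_hook_partitions_def)
  have "{lam \<in> partitions n. has_fixed_hook lam} = (\<Union>a\<in>{1..n}. \<Union>b\<in>{0..n}. fixed_hook_partitions a b n)"
    using has_fixed_hook_iff by (auto simp: fixed_hook_partitions_def)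
  also have "card \<dots> = (\<Sum>a\<in>{1..n}. card (\<Union>b\<in>{0..n}. fixed_hook_partitions a b n))"
    by (rule card_UN_disjoint) (use fin fixed_hook_partitions_unique in auto)
  also have "\<dots> = (\<Sum>a\<in>{1..n}. \<Sum>b\<in>{0..n}. card (fixed_hook_partitions a b n))"
    by (intro sum.cong refl card_UN_disjoint) (use fin fixed_hook_partitions_unique in auto)
  finally show ?thesis .
qed

lemma sum_card_self_mult_parts_eq_sum:
  "(\<Sum>lam\<in>partitions n. card (self_mult_parts lam))
     = (\<Sum>a\<in>{1..n}. \<Sum>b\<in>{0..n}. card (self_mult_partitions a b n))"
proof -
  have fin: "finite (self_mult_partitions a b n)" for a b
    using finite_partitions by (simp add: self_mult_partitions_def)
  have "self_mult_parts lam = {1..n} \<inter> {a. count_list lam a = a}" if "lam \<in> partitions n" for lam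
  proof -
    have "a \<in> set lam" if "1 \<le> a" "count_list lam a = a" for a
      using that count_list_0_iff[of lam a] by auto
    then show ?thesis
      using part_le_partition[OF that] unfolding self_mult_parts_def by auto
  qed
  then have "(\<Sum>lam\<in>partitions n. card (self_mult_parts lam))
      = (\<Sum>lam\<in>partitions n. \<Sum>a\<in>{1..n}. of_bool (count_list lam a = a))"
    by simp
  also have "\<dots> = (\<Sum>a\<in>{1..n}. card (partitions n \<inter> {lam. count_list lam a = a}))"
    by (subst sum.swap) (simp add: finite_partitions)
  also have "\<dots> = (\<Sum>a\<in>{1..n}. card (\<Union>b\<in>{0..n}. self_mult_partitions a b n))"
  proof -
    have "length (filter (\<lambda>x. a < x) lam) \<le> n" if "lam \<in> partitions n" for lam a
      using length_filter_le length_partition[OF that] order_trans by blast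
    then have "partitions n \<inter> {lam. count_list lam a = a} = (\<Union>b\<in>{0..n}. self_mult_partitions a b n)" for a
      unfolding self_mult_partitions_def by auto
    then show ?thesis by simp
  qed
  also have "\<dots> = (\<Sum>a\<in>{1..n}. \<Sum>b\<in>{0..n}. card (self_mult_partitions a b n))"
  proof -
    have "self_mult_partitions a b n \<inter> self_mult_partitions a b' n = {}" if "b \<noteq> b'" for a b b'
      using that unfolding self_mult_partitions_def by auto
    then show ?thesis by (intro sum.cong refl card_UN_disjoint) (use fin in auto)
  qed
  finally show ?thesis .
qed

theorem theorem2p1:
  fixes n :: nat
  assumes "n \<ge> 1"
  shows "card {lam \<in> partitions n. has_fixed_hook lam}
         = (\<Sum>lam\<in>partitions n. card (self_mult_parts lam))"
  unfolding card_fixed_hook_eq_sum sum_card_self_mult_parts_eq_sum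
  by (intro sum.cong refl card_eq_if_count_fps_eq)
    (simp add: count_fps_fixed_hook_partitions count_fps_self_mult_partitions)

end
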